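(* Let $p$ be an odd prime and $q$ a positive integer. The complete graph $K_{qp}$ is a Legendre cordial graph modulo $p$ if and only if $q=1$ and $p=3$.
   Context: For an odd prime $p$ and an integer $a$ not divisible by $p$, $(a/p)$ denotes the Legendre symbol: $1$ if $a$ is a quadratic residue mod $p$, $-1$ otherwise. For a simple connected graph $G$ of order $n$, a bijection $f:V(G)\to\{1,\dots,n\}$ is a Legendre cordial labeling modulo $p$ if the induced edge labeling $f_p^*:E(G)\to\{0,1\}$, defined by $f_p^*(uv)=0$ if $p\mid f(u)+f(v)$ or $((f(u)+f(v))/p)=-1$, and $f_p^*(uv)=1$ if $((f(u)+f(v))/p)=1$, satisfies $|e_{f_p^*}(0)-e_{f_p^*}(1)|\le1$, where $e_{f_p^*}(i)$ is the number of edges with label $i$. A graph admitting such a labeling is a Legendre cordial graph modulo $p$. *)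

theory Defs
  imports "HOL-Number_Theory.Number_Theory"
begin

(* A simple graph is given by a finite vertex set V and a set E of edges,
   each edge being a 2-element subset {u,v} of V (u \<noteq> v). *)

definition edge_label :: "nat \<Rightarrow> ('a \<Rightarrow> nat) \<Rightarrow> 'a set \<Rightarrow> nat" where
  "edge_label p f e = (if Legendre (int (\<Sum>x\<in>e. f x)) (int p) = 1 then 1 else 0)"

definition num_edges_label :: "nat \<Rightarrow> ('a \<Rightarrow> nat) \<Rightarrow> 'a set set \<Rightarrow> nat \<Rightarrow> nat" where
  "num_edges_label p f E i = card {e \<in> E. edge_label p f e = i}"

definition legendre_cordial_labeling ::
  "nat \<Rightarrow> 'a set \<Rightarrow> 'a set set \<Rightarrow> ('a \<Rightarrow> nat) \<Rightarrow> bool" where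
  "legendre_cordial_labeling p V E f \<longleftrightarrow>
     bij_betw f V {1..card V} \<and>
     \<bar>int (num_edges_label p f E 0) - int (num_edges_label p f E 1)\<bar> \<le> 1"

definition legendre_cordial_graph :: "nat \<Rightarrow> 'a set \<Rightarrow> 'a set set \<Rightarrow> bool" where
  "legendre_cordial_graph p V E \<longleftrightarrow> (\<exists>f. legendre_cordial_labeling p V E f)"

definition complete_graph_edges :: "nat \<Rightarrow> nat set set" where
  "complete_graph_edges n = {{u, v} | u v. u \<in> {1..n} \<and> v \<in> {1..n} \<and> u \<noteq> v}"

end

theory Submission
  imports Defs
begin

text \<open>A bijective labelling of \<open>K\<^sub>n\<close> by \<open>{1..n}\<close> only permutes the edges, so the label counts
are those of the identity labelling, where the label of an edge depends only on its vertex sum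
modulo \<open>p\<close>. If \<open>p\<close> divides \<open>n\<close>, the cyclic shift \<open>x \<mapsto> x + t\<close> of \<open>{1..n}\<close> adds \<open>2t\<close> to every
edge sum modulo \<open>p\<close>; as \<open>2\<close> is invertible modulo the odd number \<open>p\<close>, all \<open>p\<close> residue classes
of edge sums have the same size \<open>N\<close>. At most \<open>(p - 1)/2\<close> residues are quadratic residues,
so at least \<open>N\<close> more edges get label 0 than label 1, and \<open>N \<ge> 2\<close> unless \<open>n = p = 3\<close>.\<close>

lemma complete_graph_edgesI:
  assumes "u \<in> {1..n}" "v \<in> {1..n}" "u \<noteq> v"
  shows "{u, v} \<in> complete_graph_edges n"
  using assms unfolding complete_graph_edges_def by blast

lemma complete_graph_edgesE:
  assumes "e \<in> complete_graph_edges n"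
  obtains u v where "e = {u, v}" "u \<in> {1..n}" "v \<in> {1..n}" "u \<noteq> v"
  using assms unfolding complete_graph_edges_def by blast

lemma complete_graph_edges_subset_Pow: "complete_graph_edges n \<subseteq> Pow {1..n}"
  unfolding complete_graph_edges_def by auto

lemma finite_complete_graph_edges [simp]: "finite (complete_graph_edges n)"
  using complete_graph_edges_subset_Pow by (rule finite_subset) simp

lemma image_complete_graph_edges:
  assumes "bij_betw g {1..n} {1..n}"
  shows "image g ` complete_graph_edges n = complete_graph_edges n"
proof (rule endo_inj_surj[OF finite_complete_graph_edges])
  have inj: "inj_on g {1..n}"
    using assms by (rule bij_betw_imp_inj_on)
  show "image g ` complete_graph_edges n \<subseteq> complete_graph_edges n"
  proof
    fix e' assume "e' \<in> image g ` complete_graph_edges n"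
    then obtain e where e: "e \<in> complete_graph_edges n" "e' = g ` e"
      by blast
    from e(1) obtain u v where uv: "e = {u, v}" "u \<in> {1..n}" "v \<in> {1..n}" "u \<noteq> v"
      by (rule complete_graph_edgesE)
    have "g u \<in> {1..n}" "g v \<in> {1..n}" "g u \<noteq> g v"
      using bij_betw_apply[OF assms] inj_on_contraD[OF inj] uv by simp_all
    then show "e' \<in> complete_graph_edges n"
      unfolding e(2) uv(1) by (simp add: complete_graph_edgesI)
  qed
  show "inj_on (image g) (complete_graph_edges n)"
    by (rule inj_on_subset[OF inj_on_image_Pow[OF inj] complete_graph_edges_subset_Pow])
qed

lemma card_complete_graph_edges_permute:
  assumes "bij_betw g {1..n} {1..n}"
  shows "card {e \<in> complete_graph_edges n. P (g ` e)} = card {e \<in> complete_graph_edges n. P e}"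
proof -
  let ?E = "complete_graph_edges n"
  have "inj_on (image g) ?E"
    using inj_on_image_Pow[OF bij_betw_imp_inj_on[OF assms]] complete_graph_edges_subset_Pow
    by (rule inj_on_subset)
  then have "card {e \<in> ?E. P (g ` e)} = card (image g ` {e \<in> ?E. P (g ` e)})"
    by (intro card_image[symmetric] inj_on_subset[OF \<open>inj_on (image g) ?E\<close>]) blast
  also have "image g ` {e \<in> ?E. P (g ` e)} = {e \<in> image g ` ?E. P e}"
    by blast
  finally show ?thesis
    unfolding image_complete_graph_edges[OF assms] .
qed

definition cyclic_shift :: "nat \<Rightarrow> nat \<Rightarrow> nat \<Rightarrow> nat" where
  "cyclic_shift n t x = (x - 1 + t) mod n + 1"

lemma bij_betw_cyclic_shift:
  assumes "0 < n"
  shows "bij_betw (cyclic_shift n t) {1..n} {1..n}"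
proof -
  let ?s = "cyclic_shift n t"
  have into: "?s ` {1..n} \<subseteq> {1..n}"
    using assms by (auto simp: cyclic_shift_def Suc_le_eq)
  have inj: "inj_on ?s {1..n}"
  proof
    fix x y assume x: "x \<in> {1..n}" and y: "y \<in> {1..n}" and "?s x = ?s y"
    then have "[x - 1 + t = y - 1 + t] (mod n)"
      by (simp add: cong_def cyclic_shift_def)
    then have "[x - 1 = y - 1] (mod n)"
      by (simp add: cong_add_rcancel_nat)
    moreover have "x - 1 < n" "y - 1 < n"
      using x y by auto
    ultimately have "x - 1 = y - 1"
      by (simp add: cong_def)
    then show "x = y"
      using x y by auto
  qed
  have "?s ` {1..n} = {1..n}"
    by (rule endo_inj_surj[OF _ into inj]) simp
  with inj show ?thesis
    by (simp add: bij_betw_def)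
qed

lemma cyclic_shift_cong:
  fixes p n t x :: nat
  assumes "p dvd n" "1 \<le> x"
  shows "[cyclic_shift n t x = x + t] (mod p)"
proof -
  have "[(x - 1 + t) mod n = x - 1 + t] (mod p)"
    using assms(1) by (simp add: cong_def mod_mod_cancel)
  then have "[cyclic_shift n t x = x - 1 + t + 1] (mod p)"
    unfolding cyclic_shift_def by (rule cong_add[OF _ cong_refl])
  also have "x - 1 + t + 1 = x + t"
    using assms(2) by linarith
  finally show ?thesis .
qed

lemma sum_image_cyclic_shift_cong:
  assumes "p dvd n" "0 < n" "e \<in> complete_graph_edges n"
  shows "[\<Sum>(cyclic_shift n t ` e) = \<Sum>e + 2 * t] (mod p)"
proof -
  obtain u v where uv: "e = {u, v}" "u \<in> {1..n}" "v \<in> {1..n}" "u \<noteq> v"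
    using assms(3) by (rule complete_graph_edgesE)
  have "cyclic_shift n t u \<noteq> cyclic_shift n t v"
    using inj_on_contraD[OF bij_betw_imp_inj_on[OF bij_betw_cyclic_shift[OF assms(2)]]] uv by blast
  then have "\<Sum>(cyclic_shift n t ` e) = cyclic_shift n t u + cyclic_shift n t v"
    using uv(1) by simp
  also have "[\<dots> = (u + t) + (v + t)] (mod p)"
    using uv by (intro cong_add cyclic_shift_cong[OF assms(1)]) auto
  also have "(u + t) + (v + t) = \<Sum>e + 2 * t"
    using uv by simp
  finally show ?thesis .
qed

lemma mod_add_diff_eq_0_iff:
  fixes a p s :: nat
  assumes "s < p"
  shows "(a + (p - s)) mod p = 0 \<longleftrightarrow> a mod p = s"
proof -
  have "a mod p = s \<longleftrightarrow> [a = s] (mod p)"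
    using assms by (simp add: cong_def)
  also have "\<dots> \<longleftrightarrow> [a + (p - s) = s + (p - s)] (mod p)"
    by (rule cong_add_rcancel_nat[symmetric])
  also have "s + (p - s) = p"
    using assms by simp
  also have "[a + (p - s) = p] (mod p) \<longleftrightarrow> (a + (p - s)) mod p = 0"
    by (simp add: cong_def)
  finally show ?thesis ..
qed

lemma card_complete_graph_edges_sum_mod_uniform:
  fixes p n s :: nat
  assumes "p dvd n" "0 < n" "odd p" "s < p"
  shows "card {e \<in> complete_graph_edges n. (\<Sum>e) mod p = s}
       = card {e \<in> complete_graph_edges n. (\<Sum>e) mod p = 0}"
proof -
  \<comment> \<open>\<open>t\<close> halves \<open>p - s\<close> modulo \<open>p\<close>, so the shift by \<open>t\<close> moves every edge sum by \<open>p - s\<close>.\<close>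
  define t where "t = (p - s) * ((p + 1) div 2)"
  have "2 * t = (p - s) * (2 * ((p + 1) div 2))"
    unfolding t_def by simp
  also have "\<dots> = (p - s) * p + (p - s)"
    using assms(3) by simp
  finally have "[2 * t = p - s] (mod p)"
    by (simp add: cong_def)
  then have shifted_sum: "[\<Sum>(cyclic_shift n t ` e) = \<Sum>e + (p - s)] (mod p)"
    if "e \<in> complete_graph_edges n" for e
    by (rule cong_trans[OF sum_image_cyclic_shift_cong[OF assms(1,2) that] cong_add[OF cong_refl]])
  have "card {e \<in> complete_graph_edges n. (\<Sum>e) mod p = 0}
      = card {e \<in> complete_graph_edges n. (\<Sum>(cyclic_shift n t ` e)) mod p = 0}"
    by (rule card_complete_graph_edges_permute[OF bij_betw_cyclic_shift[OF assms(2)],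
          of "\<lambda>e. (\<Sum>e) mod p = 0", symmetric])
  also have "\<dots> = card {e \<in> complete_graph_edges n. (\<Sum>e) mod p = s}"
    using shifted_sum mod_add_diff_eq_0_iff[OF assms(4)]
    by (intro arg_cong[where f = card] Collect_cong conj_cong refl) (simp add: cong_def)
  finally show ?thesis ..
qed

lemma card_complete_graph_edges_sum_mod_filter:
  fixes p n :: nat
  assumes "p dvd n" "0 < n" "odd p"
  shows "card {e \<in> complete_graph_edges n. R ((\<Sum>e) mod p)}
       = card {s \<in> {..<p}. R s} * card {e \<in> complete_graph_edges n. (\<Sum>e) mod p = 0}"
proof -
  let ?E = "complete_graph_edges n"
  let ?I = "{s \<in> {..<p}. R s}"
  have "0 < p"
    using assms(3) by (rule odd_pos)
  then have "{e \<in> ?E. R ((\<Sum>e) mod p)} = (\<Union>s\<in>?I. {e \<in> ?E. (\<Sum>e) mod p = s})"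
    by auto
  then have "card {e \<in> ?E. R ((\<Sum>e) mod p)} = card (\<Union>s\<in>?I. {e \<in> ?E. (\<Sum>e) mod p = s})"
    by simp
  also have "\<dots> = (\<Sum>s\<in>?I. card {e \<in> ?E. (\<Sum>e) mod p = s})"
    by (rule card_UN_disjoint) auto
  also have "\<dots> = (\<Sum>s\<in>?I. card {e \<in> ?E. (\<Sum>e) mod p = 0})"
    by (rule sum.cong[OF refl], rule card_complete_graph_edges_sum_mod_uniform[OF assms]) simp
  finally show ?thesis
    by simp
qed

lemma Legendre_cong:
  assumes "[a = b] (mod m)"
  shows "Legendre a m = Legendre b m"
proof -
  have "[a = 0] (mod m) \<longleftrightarrow> [b = 0] (mod m)"
    using cong_trans[OF cong_sym[OF assms]] cong_trans[OF assms] by blast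
  moreover have "QuadRes m a \<longleftrightarrow> QuadRes m b"
    unfolding QuadRes_def using cong_trans[OF _ cong_sym[OF assms]] cong_trans[OF _ assms] by blast
  ultimately show ?thesis
    unfolding Legendre_def by simp
qed

lemma Legendre_int_mod: "Legendre (int (a mod m)) (int m) = Legendre (int a) (int m)"
  by (rule Legendre_cong) (simp add: cong_def zmod_int)

lemma QuadRes_root_le_half:
  fixes p :: nat
  assumes "odd p" "QuadRes (int p) a" "\<not> [a = 0] (mod int p)"
  obtains m where "m \<in> {1..(p - 1) div 2}" "[int m ^ 2 = a] (mod int p)"
proof -
  define h where "h = (p - 1) div 2"
  have p: "int p = 2 * int h + 1"
    using assms(1) unfolding h_def by (auto elim!: oddE)
  obtain y where y: "[y ^ 2 = a] (mod int p)"
    using assms(2) unfolding QuadRes_def by blast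
  define r where "r = y mod int p"
  have "0 < int p"
    using p by linarith
  then have r: "0 \<le> r" "r < int p"
    unfolding r_def by simp_all
  have r_root: "[r ^ 2 = a] (mod int p)"
    using y unfolding r_def by (simp add: cong_def power_mod)
  then have "r \<noteq> 0"
    using assms(3) by (auto simp: cong_sym_eq)
  define x where "x = (if r \<le> int h then r else int p - r)"
  have x: "1 \<le> x" "x \<le> int h"
    using r \<open>r \<noteq> 0\<close> p unfolding x_def by auto
  have "[(int p - r) ^ 2 = (- r) ^ 2] (mod int p)"
    by (intro cong_pow) (simp add: cong_def)
  then have "[x ^ 2 = r ^ 2] (mod int p)"
    unfolding x_def by simp
  then have "[x ^ 2 = a] (mod int p)"
    using r_root by (rule cong_trans)
  moreover have "nat x \<in> {1..(p - 1) div 2}"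
    using x unfolding h_def by auto
  ultimately show thesis
    using x by (intro that[of "nat x"]) simp_all
qed

lemma card_quadratic_residues_le:
  fixes p :: nat
  assumes "odd p"
  shows "card {s \<in> {..<p}. Legendre (int s) (int p) = 1} \<le> (p - 1) div 2"
proof -
  have "{s \<in> {..<p}. Legendre (int s) (int p) = 1} \<subseteq> (\<lambda>m. m ^ 2 mod p) ` {1..(p - 1) div 2}"
  proof
    fix s assume "s \<in> {s \<in> {..<p}. Legendre (int s) (int p) = 1}"
    then have "s < p" "QuadRes (int p) (int s)" "\<not> [int s = 0] (mod int p)"
      unfolding Legendre_def by (auto split: if_splits)
    then obtain m where "m \<in> {1..(p - 1) div 2}" "[int m ^ 2 = int s] (mod int p)"
      using assms by (auto elim: QuadRes_root_le_half)
    moreover have "[int m ^ 2 = int s] (mod int p) \<longleftrightarrow> m ^ 2 mod p = s"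
      using cong_int_iff[of "m ^ 2" s p] \<open>s < p\<close> by (simp add: cong_def)
    ultimately show "s \<in> (\<lambda>m. m ^ 2 mod p) ` {1..(p - 1) div 2}"
      by (intro image_eqI[where x = m]) simp_all
  qed
  then have "card {s \<in> {..<p}. Legendre (int s) (int p) = 1}
      \<le> card ((\<lambda>m. m ^ 2 mod p) ` {1..(p - 1) div 2})"
    by (rule card_mono[rotated]) simp
  also have "\<dots> \<le> (p - 1) div 2"
    using card_image_le[of "{1..(p - 1) div 2}"] by simp
  finally show ?thesis .
qed

lemma num_edges_label_complete_graph:
  assumes "odd p" "p dvd n" "0 < n" "bij_betw f {1..n} {1..n}"
  shows "num_edges_label p f (complete_graph_edges n) i
       = card {s \<in> {..<p}. (if Legendre (int s) (int p) = 1 then 1 else 0) = i}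
         * card {e \<in> complete_graph_edges n. (\<Sum>e) mod p = 0}"
proof -
  let ?E = "complete_graph_edges n"
  let ?label = "\<lambda>m::nat. if Legendre (int m) (int p) = 1 then 1 else 0"
  have "num_edges_label p f ?E i = card {e \<in> ?E. ?label (\<Sum>(f ` e)) = i}"
    unfolding num_edges_label_def
  proof (intro arg_cong[where f = card] Collect_cong conj_cong refl)
    fix e assume "e \<in> ?E"
    then have "e \<subseteq> {1..n}"
      using complete_graph_edges_subset_Pow by blast
    then have "inj_on f e"
      by (rule inj_on_subset[OF bij_betw_imp_inj_on[OF assms(4)]])
    then have "(\<Sum>x\<in>e. f x) = \<Sum>(f ` e)"
      by (simp add: sum.reindex)
    then show "edge_label p f e = i \<longleftrightarrow> ?label (\<Sum>(f ` e)) = i"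
      unfolding edge_label_def by (simp only:)
  qed
  also have "\<dots> = card {e \<in> ?E. ?label (\<Sum>e) = i}"
    by (rule card_complete_graph_edges_permute[OF assms(4)])
  also have "\<dots> = card {e \<in> ?E. ?label ((\<Sum>e) mod p) = i}"
    by (simp only: Legendre_int_mod)
  also have "\<dots> = card {s \<in> {..<p}. ?label s = i} * card {e \<in> ?E. (\<Sum>e) mod p = 0}"
    by (rule card_complete_graph_edges_sum_mod_filter[OF assms(2,3,1)])
  finally show ?thesis .
qed

lemma num_edges_label_complete_graph_gap:
  assumes "odd p" "p dvd n" "0 < n" "bij_betw f {1..n} {1..n}"
  shows "num_edges_label p f (complete_graph_edges n) 1
           + card {e \<in> complete_graph_edges n. (\<Sum>e) mod p = 0}
         \<le> num_edges_label p f (complete_graph_edges n) 0"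
proof -
  let ?Q = "{s \<in> {..<p}. Legendre (int s) (int p) = 1}"
  let ?N = "card {e \<in> complete_graph_edges n. (\<Sum>e) mod p = 0}"
  have "{s \<in> {..<p}. (if Legendre (int s) (int p) = 1 then 1 else 0) = (1::nat)} = ?Q"
    by auto
  then have ones: "num_edges_label p f (complete_graph_edges n) 1 = card ?Q * ?N"
    using num_edges_label_complete_graph[OF assms, of 1] by simp
  have "{s \<in> {..<p}. (if Legendre (int s) (int p) = 1 then 1 else 0) = (0::nat)} = {..<p} - ?Q"
    by auto
  moreover have "card ({..<p} - ?Q) = p - card ?Q"
    by (subst card_Diff_subset) auto
  ultimately have zeros: "num_edges_label p f (complete_graph_edges n) 0 = (p - card ?Q) * ?N"
    using num_edges_label_complete_graph[OF assms, of 0] by simp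
  have "card ?Q \<le> (p - 1) div 2"
    using assms(1) by (rule card_quadratic_residues_le)
  then have "card ?Q + 1 \<le> p - card ?Q"
    using assms(1) by (auto elim!: oddE)
  then have "(card ?Q + 1) * ?N \<le> (p - card ?Q) * ?N"
    by (rule mult_right_mono) simp
  then show ?thesis
    unfolding ones zeros by (simp add: algebra_simps)
qed

lemma two_le_card_complete_graph_edges_sum_mod_zero:
  assumes "odd p" "1 < p" "p dvd n" "3 < n"
  shows "2 \<le> card {e \<in> complete_graph_edges n. (\<Sum>e) mod p = 0}"
proof -
  let ?S = "{e \<in> complete_graph_edges n. (\<Sum>e) mod p = 0}"
  have "3 \<le> p"
    using assms(1,2) by presburger
  have zero_sum_edge: "{u, v} \<in> ?S"
    if "u \<in> {1..n}" "v \<in> {1..n}" "u \<noteq> v" "p dvd u + v" for u v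
    using that by (auto intro: complete_graph_edgesI)
  obtain e\<^sub>1 e\<^sub>2 where "e\<^sub>1 \<in> ?S" "e\<^sub>2 \<in> ?S" "e\<^sub>1 \<noteq> e\<^sub>2"
  proof (cases "n = p")
    case True
    then have "5 \<le> p"
      using assms(1,4) by presburger
    then have "1 + (p - 1) = p" "2 + (p - 2) = p"
      by linarith+
    then have "{1, p - 1} \<in> ?S" "{2, p - 2} \<in> ?S"
      using True \<open>5 \<le> p\<close> by (intro zero_sum_edge; simp)+
    moreover have "{1, p - 1} \<noteq> {2, p - 2}"
      using \<open>5 \<le> p\<close> by (simp add: doubleton_eq_iff)
    ultimately show thesis
      by (rule that)
  next
    case False
    obtain k where k: "n = p * k"
      using assms(3) by (rule dvdE)
    have "k \<noteq> 0"
      using assms(4) k by (metis mult_0_right not_less_zero)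
    moreover have "k \<noteq> 1"
      using False k by simp
    ultimately have "2 \<le> k"
      by linarith
    then have "2 * p \<le> n"
      unfolding k by simp
    moreover have "1 + (p - 1) = p" "1 + (2 * p - 1) = 2 * p"
      using \<open>3 \<le> p\<close> by linarith+
    ultimately have "{1, p - 1} \<in> ?S" "{1, 2 * p - 1} \<in> ?S"
      using \<open>3 \<le> p\<close> by (intro zero_sum_edge; auto)+
    moreover have "{1, p - 1} \<noteq> {1, 2 * p - 1}"
      using \<open>3 \<le> p\<close> by (simp add: doubleton_eq_iff)
    ultimately show thesis
      by (rule that)
  qed
  then have "card {e\<^sub>1, e\<^sub>2} \<le> card ?S"
    by (intro card_mono) auto
  with \<open>e\<^sub>1 \<noteq> e\<^sub>2\<close> show ?thesis
    by simp
qed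

lemma not_legendre_cordial_complete_graph:
  assumes "odd p" "1 < p" "p dvd n" "3 < n"
  shows "\<not> legendre_cordial_graph p {1..n} (complete_graph_edges n)"
proof
  assume "legendre_cordial_graph p {1..n} (complete_graph_edges n)"
  then obtain f where f: "bij_betw f {1..n} {1..n}"
    and balanced: "\<bar>int (num_edges_label p f (complete_graph_edges n) 0)
                    - int (num_edges_label p f (complete_graph_edges n) 1)\<bar> \<le> 1"
    unfolding legendre_cordial_graph_def legendre_cordial_labeling_def by auto
  have "2 \<le> card {e \<in> complete_graph_edges n. (\<Sum>e) mod p = 0}"
    using assms by (rule two_le_card_complete_graph_edges_sum_mod_zero)
  moreover have "num_edges_label p f (complete_graph_edges n) 1
      + card {e \<in> complete_graph_edges n. (\<Sum>e) mod p = 0}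
      \<le> num_edges_label p f (complete_graph_edges n) 0"
    using assms f by (intro num_edges_label_complete_graph_gap) auto
  ultimately show False
    using balanced by linarith
qed

lemma legendre_cordial_complete_graph_3: "legendre_cordial_graph 3 {1..3} (complete_graph_edges 3)"
proof -
  have edges: "complete_graph_edges 3 = {{1, 2}, {1, 3}, {2, 3}}"
  proof
    show "complete_graph_edges 3 \<subseteq> {{1, 2}, {1, 3}, {2, 3}}"
    proof
      fix e assume "e \<in> complete_graph_edges 3"
      then obtain u v where "e = {u, v}" "u \<in> {1..3}" "v \<in> {1..3}" "u \<noteq> v"
        by (rule complete_graph_edgesE)
      moreover have "{1..3::nat} = {1, 2, 3}"
        by auto
      ultimately have "u \<in> {1, 2, 3}" "v \<in> {1, 2, 3}" "e = {u, v}" "u \<noteq> v"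
        by (simp_all only: simp_thms)
      then show "e \<in> {{1, 2}, {1, 3}, {2, 3}}"
        by (elim insertE emptyE) (simp_all add: insert_commute)
    qed
    show "{{1, 2}, {1, 3}, {2, 3}} \<subseteq> complete_graph_edges 3"
      by (auto intro!: complete_graph_edgesI)
  qed
  have "Legendre 3 3 = 0"
    by (simp add: Legendre_def cong_def)
  moreover have "Legendre 4 3 = 1"
    unfolding Legendre_def QuadRes_def cong_def by (auto intro: exI[of _ 2])
  moreover have "\<not> QuadRes 3 5"
  proof
    assume "QuadRes 3 5"
    then obtain y :: int where "[y ^ 2 = 5] (mod 3)"
      unfolding QuadRes_def by blast
    then have "(y mod 3) ^ 2 mod 3 = 2"
      by (simp add: cong_def power_mod)
    moreover have "y mod 3 \<in> {0, 1, 2}"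
      by auto
    ultimately show False
      by auto
  qed
  then have "Legendre 5 3 = -1"
    by (simp add: Legendre_def cong_def)
  ultimately have labels: "edge_label 3 id {1, 2} = 0" "edge_label 3 id {1, 3} = 1"
    "edge_label 3 id {2, 3} = 0"
    unfolding edge_label_def by simp_all
  have "{e \<in> complete_graph_edges 3. edge_label 3 id e = 0} = {{1, 2}, {2, 3}}"
    "{e \<in> complete_graph_edges 3. edge_label 3 id e = 1} = {{1, 3}}"
    unfolding edges using labels by auto
  then have "num_edges_label 3 id (complete_graph_edges 3) 0 = 2"
    "num_edges_label 3 id (complete_graph_edges 3) 1 = 1"
    unfolding num_edges_label_def by (simp_all add: doubleton_eq_iff)
  then show ?thesis
    unfolding legendre_cordial_graph_def legendre_cordial_labeling_def by auto
qed

theorem corollary3p4: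
  fixes p q :: nat
  assumes "prime p" and "odd p" and "q > 0"
  shows "legendre_cordial_graph p {1..q * p} (complete_graph_edges (q * p))
           \<longleftrightarrow> q = 1 \<and> p = 3"
proof
  assume cordial: "legendre_cordial_graph p {1..q * p} (complete_graph_edges (q * p))"
  show "q = 1 \<and> p = 3"
  proof (rule ccontr)
    assume "\<not> (q = 1 \<and> p = 3)"
    moreover have "3 \<le> p"
      using assms(1,2) prime_ge_2_nat[of p] by presburger
    ultimately have "3 < q * p"
    proof (cases "q = 1")
      case False
      then have "2 * 3 \<le> q * p"
        using assms(3) \<open>3 \<le> p\<close> by (intro mult_mono) auto
      then show ?thesis
        by simp
    qed auto
    with cordial show False
      using not_legendre_cordial_complete_graph[OF assms(2) prime_gt_1_nat[OF assms(1)] dvd_triv_right]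
      by blast
  qed
next
  assume "q = 1 \<and> p = 3"
  then show "legendre_cordial_graph p {1..q * p} (complete_graph_edges (q * p))"
    using legendre_cordial_complete_graph_3 by simp
qed

end
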